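(* Let $\boldsymbol{m}\in\mathbb{N}^2$ and $\boldsymbol{\gamma}=(\gamma_1,\gamma_2)\in\mathbb{Z}^2$ with $\gamma_1\equiv\gamma_2\pmod 2$. If $\sum_{\boldsymbol{i}\in\mathrm{I}^{(\boldsymbol{m})}}w_{\boldsymbol{i}}\,\chi_{\boldsymbol{\gamma}}(\boldsymbol{i})\neq0$, then there exist $h_1,h_2\in\mathbb{Z}$ with $\gamma_1=2h_1m_1$, $\gamma_2=2h_2m_2$ and $h_1+h_2$ even. Conversely, if such $h_1,h_2$ exist, then $\sum_{\boldsymbol{i}\in\mathrm{I}^{(\boldsymbol{m})}}w_{\boldsymbol{i}}\,\chi_{\boldsymbol{\gamma}}(\boldsymbol{i})=1$.
   Context: $\mathrm{I}^{(\boldsymbol{m})}=\{(i_1,i_2)\in\mathbb{Z}^2:\ 0\le i_1\le m_1,\ -2m_2<i_2\le 2m_2,\ i_2\le0\text{ if }i_1=m_1,\ i_1+i_2\text{ even}\}$. Weights: $w_{\boldsymbol{i}}=\frac{1}{4m_1m_2}$ if $i_1=0$ and $w_{\boldsymbol{i}}=\frac{2}{4m_1m_2}$ if $0<i_1\le m_1$. For $\boldsymbol{\gamma}\in\mathbb{Z}^2$, $\chi_{\boldsymbol{\gamma}}:\mathrm{I}^{(\boldsymbol{m})}\to\mathbb{C}$, $\chi_{\boldsymbol{\gamma}}(\boldsymbol{i})=\cos\!\big(\frac{\gamma_1i_1\pi}{2m_1}\big)e^{\mathrm{i}\gamma_2i_2\pi/(2m_2)}$. *)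

theory Defs
  imports "HOL-Analysis.Analysis"
begin

definition Iset :: "nat \<Rightarrow> nat \<Rightarrow> (int \<times> int) set" where
  "Iset m1 m2 = {(i1, i2). 0 \<le> i1 \<and> i1 \<le> int m1 \<and> - 2 * int m2 < i2 \<and> i2 \<le> 2 * int m2
      \<and> (i1 = int m1 \<longrightarrow> i2 \<le> 0) \<and> even (i1 + i2)}"

definition wt :: "nat \<Rightarrow> nat \<Rightarrow> int \<times> int \<Rightarrow> real" where
  "wt m1 m2 i = (if fst i = 0 then 1 / (4 * real m1 * real m2) else 2 / (4 * real m1 * real m2))"

definition chi :: "nat \<Rightarrow> nat \<Rightarrow> int \<times> int \<Rightarrow> int \<times> int \<Rightarrow> complex" where
  "chi m1 m2 \<gamma> i = complex_of_real (cos (real_of_int (fst \<gamma> * fst i) * pi / (2 * real m1)))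
      * exp (\<i> * complex_of_real (real_of_int (snd \<gamma> * snd i) * pi / (2 * real m2)))"

end

theory Submission
  imports Defs "HOL-Library.Real_Mod"
begin

(* Summing row by row (fixed i1), each row contributes a geometric sum in cis (gamma2 pi / m2)
   over a full period (half a period in the last row), which vanishes unless 2 m2 divides gamma2;
   in the last row with gamma2 odd, the cosine factor cos (gamma1 pi / 2) vanishes instead.
   If gamma2 = 2 h2 m2, then, because i1 + i2 is even, the character
   chi_gamma(i) = cos ((gamma1 + 2 h2 m1) i1 pi / (2 m1)) depends on i1 only, and the weighted
   sum is a trapezoidal cosine sum over half a period. By the reflection j -> 2 m1 - j it is a
   full-period sum, which is 1 if 4 m1 divides gamma1 + 2 h2 m1, i.e. if h1 + h2 is even,
   and 0 otherwise. *)

lemma cis_of_int_pi_div_eq_1_iff: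
  assumes "n > 0"
  shows "cis (of_int g * pi / of_nat n) = 1 \<longleftrightarrow> int (2 * n) dvd g"
proof -
  have "of_int g * pi / of_nat n = of_int k * (2 * pi) \<longleftrightarrow> g = int (2 * n) * k" for k
  proof -
    have "of_int g * pi / of_nat n = of_int k * (2 * pi)
          \<longleftrightarrow> of_int g = (of_int (int (2 * n) * k) :: real)"
      using assms by (simp add: field_simps)
    then show ?thesis by (simp only: of_int_eq_iff)
  qed
  then show ?thesis by (auto simp: cis_eq_1_iff dvd_def)
qed

lemma sum_powers_root_of_unity:
  fixes z :: "'a :: field"
  assumes "z ^ N = 1"
  shows "(\<Sum>k<N. z ^ k) = (if z = 1 then of_nat N else 0)"
  using assms by (simp add: sum_gp_strict)

lemma sum_cos_multiples_root_of_unity: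
  assumes "cis c ^ N = 1"
  shows "(\<Sum>j<N. cos (c * real j)) = (if cis c = 1 then real N else 0)"
proof -
  have "(\<Sum>j<N. cos (c * real j)) = Re (\<Sum>j<N. cis c ^ j)"
    by (simp add: Complex.DeMoivre mult.commute)
  then show ?thesis using sum_powers_root_of_unity[OF assms] by simp
qed

lemma trapezoid_cos_sum_eq_period_sum:
  fixes m :: nat
  assumes "m > 0" and "cis c ^ (2 * m) = 1"
  shows "(\<Sum>j=0..m. (if j = 0 \<or> j = m then 1 else 2) * cos (c * real j))
       = (\<Sum>j<2 * m. cos (c * real j))"
proof -
  let ?f = "\<lambda>j::nat. cos (c * real j)"
  have cis_period: "cis (real (2 * m) * c) = 1" using assms(2) by (simp add: Complex.DeMoivre)
  have period: "cos (real (2 * m) * c) = 1" "sin (real (2 * m) * c) = 0"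
    using arg_cong[OF cis_period, of Re] arg_cong[OF cis_period, of Im] by simp_all
  have "(\<Sum>j=0..m. (if j = 0 \<or> j = m then 1 else 2) * ?f j)
      = (\<Sum>j=0..m. (if j < m then ?f j else 0) + (if 1 \<le> j then ?f j else 0))"
    using assms(1) by (intro sum.cong) auto
  also have "\<dots> = (\<Sum>j<m. ?f j) + (\<Sum>j=1..m. ?f j)"
    by (simp add: sum.distrib sum.inter_filter[symmetric];
        intro arg_cong2[where f = "(+)"] sum.cong) auto
  also have "(\<Sum>j=1..m. ?f j) = (\<Sum>j=m..<2 * m. ?f j)"
  proof (rule sum.reindex_bij_witness[of _ "\<lambda>j. 2 * m - j" "\<lambda>j. 2 * m - j"])
    fix j assume "j \<in> {1..m}"
    then show "?f (2 * m - j) = ?f j"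
      using period by (simp add: cos_diff algebra_simps)
  qed auto
  also have "(\<Sum>j<m. ?f j) + (\<Sum>j=m..<2 * m. ?f j) = (\<Sum>j<2 * m. ?f j)"
    by (simp add: lessThan_atLeast0 sum.atLeastLessThan_concat)
  finally show ?thesis .
qed

lemma trapezoid_cos_sum:
  fixes m :: nat and g :: int
  assumes "m > 0" and "even g"
  shows "(\<Sum>j=0..m. (if j = 0 \<or> j = m then 1 else 2) * cos (of_int g * pi / (2 * real m) * real j))
       = (if int (4 * m) dvd g then 2 * real m else 0)"
proof -
  let ?c = "of_int g * pi / (2 * real m)"
  obtain s where s: "g = 2 * s" using assms(2) ..
  have "real (2 * m) * ?c = 2 * pi * of_int s" using assms(1) by (simp add: s field_simps)
  then have period: "cis ?c ^ (2 * m) = 1" by (simp add: Complex.DeMoivre)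
  have "cis ?c = 1 \<longleftrightarrow> int (4 * m) dvd g"
    using cis_of_int_pi_div_eq_1_iff[of "2 * m" g] assms(1) by simp
  then show ?thesis
    unfolding trapezoid_cos_sum_eq_period_sum[OF assms(1) period]
      sum_cos_multiples_root_of_unity[OF period] by simp
qed

definition row_start :: "nat \<Rightarrow> nat \<Rightarrow> int" where
  "row_start m2 j = (if even j then 2 else 1) - 2 * int m2"

definition row_length :: "nat \<Rightarrow> nat \<Rightarrow> nat \<Rightarrow> nat" where
  "row_length m1 m2 j = (if j = m1 then m2 else 2 * m2)"

lemma Iset_eq_rows:
  "Iset m1 m2 = (\<lambda>(j, k). (int j, row_start m2 j + 2 * int k))
                  ` (SIGMA j:{0..m1}. {..<row_length m1 m2 j})"
proof (intro equalityI subsetI)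
  fix i assume "i \<in> Iset m1 m2"
  then obtain a b where i: "i = (a, b)" and a: "0 \<le> a" "a \<le> int m1"
    and b: "- 2 * int m2 < b" "b \<le> 2 * int m2" "a = int m1 \<longrightarrow> b \<le> 0" and ab: "even (a + b)"
    by (auto simp: Iset_def)
  define j where "j = nat a"
  define k where "k = nat ((b - row_start m2 j) div 2)"
  have "even (b - row_start m2 j)" "row_start m2 j \<le> b"
    using ab b a by (auto simp: row_start_def j_def; presburger)+
  then have "b = row_start m2 j + 2 * int k" by (auto simp: k_def)
  moreover have "k < row_length m1 m2 j"
    using b a \<open>b = row_start m2 j + 2 * int k\<close>
    by (auto simp: row_length_def row_start_def j_def split: if_splits)
  ultimately show "i \<in> (\<lambda>(j, k). (int j, row_start m2 j + 2 * int k))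
                          ` (SIGMA j:{0..m1}. {..<row_length m1 m2 j})"
    using a by (intro image_eqI[of _ _ "(j, k)"]) (auto simp: i j_def)
qed (auto simp: Iset_def row_start_def row_length_def split: if_splits)

lemma sum_Iset_by_rows:
  "(\<Sum>i\<in>Iset m1 m2. f i)
     = (\<Sum>j=0..m1. \<Sum>k<row_length m1 m2 j. f (int j, row_start m2 j + 2 * int k))"
  unfolding Iset_eq_rows by (subst sum.reindex) (auto simp: inj_on_def sum.Sigma case_prod_unfold)

lemma chi_eq_cos_cis:
  "chi m1 m2 (g1, g2) (a, b)
     = of_real (cos (of_int (g1 * a) * pi / (2 * real m1)))
       * cis (of_int (g2 * b) * pi / (2 * real m2))"
  by (simp add: chi_def cis_conv_exp)

lemma sum_cis_arith_progression:
  "(\<Sum>k<N. cis (of_int (g * (r + 2 * int k)) * pi / (2 * real m)))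
     = cis (of_int (g * r) * pi / (2 * real m)) * (\<Sum>k<N. cis (of_int g * pi / real m) ^ k)"
  unfolding sum_distrib_left Complex.DeMoivre cis_mult
  by (intro sum.cong refl arg_cong[where f = cis]) (simp add: add_divide_distrib algebra_simps)

lemma sum_cis_row_eq_0:
  assumes "m2 > 0" and "\<not> int (2 * m2) dvd g" and "j \<noteq> m1 \<or> even g"
  shows "(\<Sum>k<row_length m1 m2 j.
            cis (of_int (g * (row_start m2 j + 2 * int k)) * pi / (2 * real m2))) = 0"
proof -
  let ?z = "cis (of_int g * pi / real m2)"
  define n :: nat where "n = (if j = m1 then 1 else 2)"
  have n: "row_length m1 m2 j = n * m2" "even (int n * g)"
    using assms(3) by (auto simp: row_length_def n_def)
  then obtain s where s: "int n * g = 2 * s" by blast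
  have "real n * of_int g = 2 * of_int s" using arg_cong[OF s, of real_of_int] by simp
  then have "real (row_length m1 m2 j) * (of_int g * pi / real m2) = 2 * pi * of_int s"
    using assms(1) n(1) by (simp add: field_simps)
  then have "?z ^ row_length m1 m2 j = 1" by (simp add: Complex.DeMoivre)
  moreover have "?z \<noteq> 1" using cis_of_int_pi_div_eq_1_iff[OF assms(1)] assms(2) by simp
  ultimately show ?thesis
    unfolding sum_cis_arith_progression by (simp add: sum_powers_root_of_unity)
qed

lemma weighted_chi_sum_nonresonant:
  assumes "m1 > 0" and "m2 > 0" and "g1 mod 2 = g2 mod 2" and "\<not> int (2 * m2) dvd g2"
  shows "(\<Sum>i\<in>Iset m1 m2. of_real (wt m1 m2 i) * chi m1 m2 (g1, g2) i) = 0"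
proof -
  let ?cos = "\<lambda>j::nat. cos (of_int (g1 * int j) * pi / (2 * real m1))"
  let ?row = "\<lambda>j. \<Sum>k<row_length m1 m2 j.
                  cis (of_int (g2 * (row_start m2 j + 2 * int k)) * pi / (2 * real m2))"
  have row_term_eq_0: "?cos j * ?row j = 0" for j
  proof (cases "j = m1 \<and> odd g2")
    case True
    then have "odd g1" using assms(3) by (metis even_iff_mod_2_eq_zero)
    then have "?cos j = 0" using True assms(1) by (auto simp: cos_zero_iff_int intro!: exI[of _ g1])
    then show ?thesis by simp
  next
    case False
    then show ?thesis using sum_cis_row_eq_0[OF assms(2,4)] by auto
  qed
  have "(\<Sum>i\<in>Iset m1 m2. of_real (wt m1 m2 i) * chi m1 m2 (g1, g2) i)
      = (\<Sum>j=0..m1. of_real (wt m1 m2 (int j, 0)) * (of_real (?cos j) * ?row j))"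
    by (simp add: sum_Iset_by_rows chi_eq_cos_cis wt_def sum_distrib_left mult.assoc)
  also have "\<dots> = 0" by (simp only: row_term_eq_0 mult_zero_right sum.neutral_const)
  finally show ?thesis .
qed

lemma chi_resonant:
  assumes "m1 > 0" and "m2 > 0" and "even (a + b)"
  shows "chi m1 m2 (g1, 2 * h2 * int m2) (a, b)
           = of_real (cos (of_int ((g1 + 2 * h2 * int m1) * a) * pi / (2 * real m1)))"
proof -
  obtain t where b: "b = 2 * t - a" using assms(3) by (metis evenE add_diff_cancel_left')
  have sin_h2a: "sin (of_int (h2 * a) * pi) = 0" by (simp add: sin_times_pi_eq_0)
  have "of_int (2 * h2 * int m2 * b) * pi / (2 * real m2)
        = 2 * pi * of_int (h2 * t) + - (of_int (h2 * a) * pi)"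
    using assms(2) by (simp add: b field_simps)
  then have "cis (of_int (2 * h2 * int m2 * b) * pi / (2 * real m2)) = cis (- (of_int (h2 * a) * pi))"
    by (simp only: cis_mult[symmetric] cis_multiple_2pi Ints_of_int mult_1_left)
  also have "\<dots> = of_real (cos (of_int (h2 * a) * pi))"
    by (intro complex_eqI)
      (simp_all only: cis.sel Re_complex_of_real Im_complex_of_real cos_minus sin_minus sin_h2a minus_zero)
  finally have cis_part: "cis (of_int (2 * h2 * int m2 * b) * pi / (2 * real m2))
                            = of_real (cos (of_int (h2 * a) * pi))" .
  have "of_int ((g1 + 2 * h2 * int m1) * a) * pi / (2 * real m1)
      = of_int (g1 * a) * pi / (2 * real m1) + of_int (h2 * a) * pi"
    using assms(1) by (simp add: field_simps)
  then show ?thesis using cis_part by (simp add: chi_eq_cos_cis cos_add sin_h2a del: of_int_mult)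
qed

lemma sum_Iset_weighted_fst:
  assumes "m1 > 0" and "m2 > 0"
  shows "(\<Sum>i\<in>Iset m1 m2. wt m1 m2 i * f (fst i))
       = (\<Sum>j=0..m1. (if j = 0 \<or> j = m1 then 1 else 2) * f (int j)) / (2 * real m1)"
proof -
  have row_weight: "real (row_length m1 m2 j) * wt m1 m2 (int j, 0)
      = (if j = 0 \<or> j = m1 then 1 else 2) / (2 * real m1)" for j
    using assms by (auto simp: wt_def row_length_def field_simps)
  have "(\<Sum>i\<in>Iset m1 m2. wt m1 m2 i * f (fst i))
      = (\<Sum>j=0..m1. real (row_length m1 m2 j) * wt m1 m2 (int j, 0) * f (int j))"
    by (simp add: sum_Iset_by_rows wt_def mult.assoc)
  then show ?thesis by (simp add: row_weight sum_divide_distrib)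
qed

lemma weighted_chi_sum_resonant:
  assumes "m1 > 0" and "m2 > 0" and "even g1"
  shows "(\<Sum>i\<in>Iset m1 m2. of_real (wt m1 m2 i) * chi m1 m2 (g1, 2 * h2 * int m2) i)
           = (if int (4 * m1) dvd g1 + 2 * h2 * int m1 then 1 else 0)"
proof -
  let ?g = "g1 + 2 * h2 * int m1"
  have "(\<Sum>i\<in>Iset m1 m2. of_real (wt m1 m2 i) * chi m1 m2 (g1, 2 * h2 * int m2) i)
      = of_real (\<Sum>i\<in>Iset m1 m2. wt m1 m2 i * cos (of_int (?g * fst i) * pi / (2 * real m1)))"
    unfolding of_real_sum by (intro sum.cong) (auto simp: Iset_def chi_resonant[OF assms(1,2)])
  also have "\<dots> = of_real ((\<Sum>j=0..m1. (if j = 0 \<or> j = m1 then 1 else 2)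
                              * cos (of_int (?g * int j) * pi / (2 * real m1))) / (2 * real m1))"
    using sum_Iset_weighted_fst[OF assms(1,2), of "\<lambda>x. cos (of_int (?g * x) * pi / (2 * real m1))"]
    by simp
  also have "\<dots> = (if int (4 * m1) dvd ?g then 1 else 0)"
    using trapezoid_cos_sum[OF assms(1), of ?g] assms(1,3) by (simp add: mult_ac)
  finally show ?thesis .
qed

lemma resonance_iff:
  assumes "m2 > 0" and "g2 = 2 * h2 * int m2"
  shows "int (4 * m1) dvd g1 + 2 * h2 * int m1
     \<longleftrightarrow> (\<exists>h1 h2'. g1 = 2 * h1 * int m1 \<and> g2 = 2 * h2' * int m2 \<and> even (h1 + h2'))"
    (is "?dvd \<longleftrightarrow> ?exists")
proof
  assume ?dvd
  then obtain n where "g1 + 2 * h2 * int m1 = 4 * int m1 * n" by auto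
  then have "g1 = 2 * (2 * n - h2) * int m1" by (simp add: algebra_simps)
  then show ?exists
    using assms(2) by (intro exI[of _ "2 * n - h2"] exI[of _ h2]) simp
next
  assume ?exists
  then obtain h1 h2' where h1: "g1 = 2 * h1 * int m1" and "g2 = 2 * h2' * int m2" and "even (h1 + h2')"
    by blast
  moreover from this assms have "h2' = h2" by simp
  ultimately obtain q where "h1 + h2 = 2 * q" by blast
  moreover have "g1 + 2 * h2 * int m1 = 2 * int m1 * (h1 + h2)" using h1 by (simp add: algebra_simps)
  ultimately have "g1 + 2 * h2 * int m1 = int (4 * m1) * q" by simp
  then show ?dvd by simp
qed

theorem proposition9p2:
  fixes m1 m2 :: nat and \<gamma>1 \<gamma>2 :: int
  assumes "m1 > 0" and "m2 > 0" and "\<gamma>1 mod 2 = \<gamma>2 mod 2"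
  shows "((\<Sum>i\<in>Iset m1 m2. complex_of_real (wt m1 m2 i) * chi m1 m2 (\<gamma>1, \<gamma>2) i) \<noteq> 0 \<longrightarrow>
            (\<exists>h1 h2 :: int. \<gamma>1 = 2 * h1 * int m1 \<and> \<gamma>2 = 2 * h2 * int m2 \<and> even (h1 + h2)))
       \<and> ((\<exists>h1 h2 :: int. \<gamma>1 = 2 * h1 * int m1 \<and> \<gamma>2 = 2 * h2 * int m2 \<and> even (h1 + h2)) \<longrightarrow>
            (\<Sum>i\<in>Iset m1 m2. complex_of_real (wt m1 m2 i) * chi m1 m2 (\<gamma>1, \<gamma>2) i) = 1)"
proof -
  let ?S = "\<Sum>i\<in>Iset m1 m2. complex_of_real (wt m1 m2 i) * chi m1 m2 (\<gamma>1, \<gamma>2) i"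
  let ?P = "\<exists>h1 h2 :: int. \<gamma>1 = 2 * h1 * int m1 \<and> \<gamma>2 = 2 * h2 * int m2 \<and> even (h1 + h2)"
  have "?S = (if ?P then 1 else 0)"
  proof (cases "int (2 * m2) dvd \<gamma>2")
    case True
    then obtain h2 where "\<gamma>2 = int (2 * m2) * h2" ..
    then have h2: "\<gamma>2 = 2 * h2 * int m2" by simp
    then have "even \<gamma>1" using assms(3) by (simp add: even_iff_mod_2_eq_zero)
    then show ?thesis
      using weighted_chi_sum_resonant[OF assms(1,2)] resonance_iff[OF assms(2) h2] h2 by simp
  next
    case False
    then have "\<not> ?P" by auto
    then show ?thesis using weighted_chi_sum_nonresonant[OF assms False] by simp
  qed
  then show ?thesis by simp
qed

end
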